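(* Let $\rho$ be an entangled state on $\mathbb{C}^m\otimes\mathbb{C}^n$ and $\mathcal{E}_\rho=\{W : W \text{ is an EW and } \mathrm{tr}(W\rho)<0\}$. Then: (i) $\mathcal{E}_\rho$ is convex. (ii) $\rho^*$ is entangled, and $W\in\mathcal{E}_\rho$ if and only if $W^*\in\mathcal{E}_{\rho^*}$. Moreover, $\mathcal{E}_\rho$ contains a real EW if and only if $\mathcal{E}_\rho\cap\mathcal{E}_{\rho^*}\neq\emptyset$. (iii) If $\rho$ is PPT entangled, then $W\in\mathcal{E}_\rho$ if and only if $W^\Gamma\in\mathcal{E}_{\rho^\Gamma}$. (iv) If $\rho$ is PPT entangled and $\rho^+$ is separable, then $\mathrm{tr}(W\rho^* )\ge-\mathrm{tr}(W\rho)>0$ whenever $W\in\mathcal{E}_\rho$, and $\mathrm{tr}(W\rho)\ge-\mathrm{tr}(W\rho^* )>0$ whenever $W\in\mathcal{E}_{\rho^*}$. (v) If $\sigma=(U\otimes V)\rho(U\otimes V)^\dagger$ with $U,V$ unitary, then $(U\otimes V)W(U\otimes V)^\dagger\in\mathcal{E}_\sigma$ for every $W\in\mathcal{E}_\rho$, and $\mathcal{E}_\sigma=(U\otimes V)\mathcal{E}_\rho(U\otimes V)^\dagger$.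
   Context: An entanglement witness (EW) on $\mathbb{C}^m\otimes\mathbb{C}^n$ is a Hermitian matrix $W$ with $\mathrm{tr}(W\sigma)\ge0$ for all separable states $\sigma$ and $\mathrm{tr}(W\sigma)<0$ for at least one entangled state. A real EW is an EW whose matrix has real entries. $M^*$ is the entrywise complex conjugate, $\rho^+=\frac12(\rho+\rho^* )$, and $M^\Gamma$ denotes the partial transpose with respect to the first subsystem. A state is PPT if $\rho^\Gamma\ge0$. *)

theory Defs
  imports "HOL-Analysis.Analysis"
begin

text \<open>The bipartite space C^m (x) C^n is indexed by
  the product type 'a \<times> 'b (first factor 'a, second factor 'b).\<close>

definition mconj :: "complex^'n^'m \<Rightarrow> complex^'n^'m" where
  "mconj M = (\<chi> i j. cnj (M $ i $ j))"

definition adj :: "complex^'n^'m \<Rightarrow> complex^'m^'n" where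
  "adj M = (\<chi> i j. cnj (M $ j $ i))"

definition hermitian :: "complex^'n^'n \<Rightarrow> bool" where
  "hermitian M \<longleftrightarrow> adj M = M"

definition psd :: "complex^'n^'n \<Rightarrow> bool" where
  "psd M \<longleftrightarrow> hermitian M \<and>
     (\<forall>x::complex^'n. 0 \<le> Re (\<Sum>i\<in>UNIV. \<Sum>j\<in>UNIV. cnj (x $ i) * M $ i $ j * x $ j))"

definition is_state :: "complex^'n^'n \<Rightarrow> bool" where
  "is_state M \<longleftrightarrow> psd M \<and> trace M = 1"

definition unitary :: "complex^'n^'n \<Rightarrow> bool" where
  "unitary U \<longleftrightarrow> U ** adj U = mat 1 \<and> adj U ** U = mat 1"

definition real_matrix :: "complex^'n^'m \<Rightarrow> bool" where
  "real_matrix M \<longleftrightarrow> (\<forall>i j. Im (M $ i $ j) = 0)"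

definition kron :: "complex^('a::finite)^'a \<Rightarrow> complex^('b::finite)^'b \<Rightarrow> complex^('a \<times> 'b)^('a \<times> 'b)" where
  "kron A B = (\<chi> p q. A $ fst p $ fst q * B $ snd p $ snd q)"

definition ptrans :: "complex^('a::finite \<times> 'b::finite)^('a \<times> 'b) \<Rightarrow> complex^('a \<times> 'b)^('a \<times> 'b)" where
  "ptrans M = (\<chi> p q. M $ (fst q, snd p) $ (fst p, snd q))"

definition separable :: "complex^('a::finite \<times> 'b::finite)^('a \<times> 'b) \<Rightarrow> bool" where
  "separable \<sigma> \<longleftrightarrow> (\<exists>(I::nat set) p A B. finite I \<and>
      (\<forall>i\<in>I. 0 \<le> p i \<and> is_state (A i) \<and> is_state (B i)) \<and> sum p I = 1 \<and>
      \<sigma> = (\<Sum>i\<in>I. p i *\<^sub>R kron (A i) (B i)))"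

definition entangled :: "complex^('a::finite \<times> 'b::finite)^('a \<times> 'b) \<Rightarrow> bool" where
  "entangled \<rho> \<longleftrightarrow> is_state \<rho> \<and> \<not> separable \<rho>"

definition PPT :: "complex^('a::finite \<times> 'b::finite)^('a \<times> 'b) \<Rightarrow> bool" where
  "PPT \<rho> \<longleftrightarrow> is_state \<rho> \<and> psd (ptrans \<rho>)"

text \<open>tr(W sigma) is real for Hermitian W and sigma, so we compare its real part.\<close>
definition EW :: "complex^('a::finite \<times> 'b::finite)^('a \<times> 'b) \<Rightarrow> bool" where
  "EW W \<longleftrightarrow> hermitian W \<and>
     (\<forall>\<sigma>. separable \<sigma> \<longrightarrow> 0 \<le> Re (trace (W ** \<sigma>))) \<and>
     (\<exists>\<rho>. entangled \<rho> \<and> Re (trace (W ** \<rho>)) < 0)"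

definition EWset :: "complex^('a::finite \<times> 'b::finite)^('a \<times> 'b) \<Rightarrow>
    (complex^('a \<times> 'b)^('a \<times> 'b)) set" where
  "EWset \<rho> = {W. EW W \<and> Re (trace (W ** \<rho>)) < 0}"

definition rho_plus :: "complex^'n^'n \<Rightarrow> complex^'n^'n" where
  "rho_plus \<rho> = (1/2::real) *\<^sub>R (\<rho> + mconj \<rho>)"

end

theory Submission
  imports Defs
begin

(* Complex conjugation W |-> conj W, partial transposition W |-> W^Gamma and a local unitary
   congruence W |-> (U (x) V) W (U (x) V)^dagger are bijections which, together with their
   inverses, preserve Hermiticity and separability, and which preserve Re tr(W sigma) when
   applied to both factors.  Such a map f carries E_rho onto E_(f rho) as soon as f rho is
   again a state; this gives (ii), (iii) and (v), and for the partial transpose it is the only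
   place where PPT enters.  E_rho is convex, so averaging W with conj W when both lie in E_rho
   gives a real witness.  Finally tr(W rho+) is the mean of tr(W rho) and tr(W (conj rho)),
   and it is nonnegative when rho+ is separable, which gives (iv) without using PPT. *)

lemma adj_adj [simp]: "adj (adj M) = M"
  by (simp add: adj_def vec_eq_iff)

lemma mconj_mconj [simp]: "mconj (mconj M) = M"
  by (simp add: mconj_def vec_eq_iff)

lemma ptrans_ptrans [simp]: "ptrans (ptrans M) = M"
  by (simp add: ptrans_def vec_eq_iff)

lemma adj_matrix_mult: "adj ((A::complex^'n^'m) ** B) = adj B ** adj A"
  by (simp add: adj_def matrix_matrix_mult_def vec_eq_iff cnj_sum mult.commute)

lemma mconj_matrix_mult: "mconj ((A::complex^'n^'m) ** B) = mconj A ** mconj B"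
  by (simp add: mconj_def matrix_matrix_mult_def vec_eq_iff cnj_sum)

lemma matrix_add_rdistrib: "((A::'a::semiring_1^'n^'m) + B) ** C = A ** C + B ** C"
  by (simp add: matrix_matrix_mult_def vec_eq_iff distrib_right sum.distrib)

lemma trace_mconj: "trace (mconj A) = cnj (trace A)"
  by (simp add: mconj_def trace_def cnj_sum)

lemma trace_ptrans: "trace (ptrans M) = trace M"
  by (simp add: ptrans_def trace_def)

lemma sum_UNIV_product: "(\<Sum>i\<in>UNIV. \<Sum>k\<in>UNIV. f i k) = (\<Sum>x\<in>UNIV. f (fst x) (snd x))"
  by (simp add: sum.cartesian_product split_def UNIV_Times_UNIV[symmetric] del: UNIV_Times_UNIV)

lemma trace_ptrans_mult: "trace (ptrans A ** ptrans B) = trace (A ** B)"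
proof -
  let ?g = "\<lambda>(r::'a\<times>'b, s::'a\<times>'b). A $ r $ s * B $ s $ r"
  let ?swap = "\<lambda>((p1::'a, p2::'b), (q1::'a, q2::'b)). ((q1, p2), (p1, q2))"
  have "trace (ptrans A ** ptrans B) = (\<Sum>x\<in>UNIV. ?g (?swap x))"
    by (simp add: trace_def matrix_matrix_mult_def ptrans_def sum_UNIV_product split_def)
  also have "\<dots> = (\<Sum>x\<in>UNIV. ?g x)"
    by (rule sum.reindex_bij_witness[of _ ?swap ?swap]) auto
  also have "\<dots> = trace (A ** B)"
    by (simp add: trace_def matrix_matrix_mult_def sum_UNIV_product split_def)
  finally show ?thesis .
qed

lemma trace_unitary_congruence:
  assumes "unitary K" shows "trace (K ** X ** adj K) = trace X"
proof -
  have "trace (K ** X ** adj K) = trace ((adj K ** K) ** X)"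
    by (metis matrix_mul_assoc trace_mul_sym)
  then show ?thesis using assms by (simp add: unitary_def)
qed

lemma linear_adj: "linear adj"
  by (rule linearI) (simp_all add: adj_def vec_eq_iff)

lemma linear_mconj: "linear mconj"
  by (rule linearI) (simp_all add: mconj_def vec_eq_iff)

lemma linear_ptrans: "linear ptrans"
  by (rule linearI) (simp_all add: ptrans_def vec_eq_iff)

lemma linear_matrix_sandwich: "linear (\<lambda>X. (A::complex^'n^'m) ** X ** B)"
  by (rule linearI)
    (simp_all add: matrix_add_ldistrib matrix_add_rdistrib matrix_scalar_ac scalar_matrix_assoc[symmetric])

lemma trace_scaleR: "trace (r *\<^sub>R (A::complex^'n^'n)) = r *\<^sub>R trace A"
  by (simp add: trace_def scaleR_sum_right)

lemma Re_trace_mult_convex_combination: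
  "Re (trace ((u *\<^sub>R W + v *\<^sub>R W') ** T)) = u * Re (trace (W ** T)) + v * Re (trace (W' ** T))"
  by (simp add: matrix_add_rdistrib trace_add scalar_matrix_assoc[symmetric] trace_scaleR)

lemma kron_matrix_mult: "kron A B ** kron C D = kron (A ** C) (B ** D)"
  by (simp add: kron_def matrix_matrix_mult_def vec_eq_iff sum_product
      UNIV_Times_UNIV[symmetric] sum.cartesian_product mult_ac split_def del: UNIV_Times_UNIV)

lemma adj_kron: "adj (kron A B) = kron (adj A) (adj B)"
  by (simp add: kron_def adj_def vec_eq_iff)

lemma mconj_kron: "mconj (kron A B) = kron (mconj A) (mconj B)"
  by (simp add: kron_def mconj_def vec_eq_iff)

lemma kron_mat_1: "kron (mat 1) (mat 1) = mat 1"
  by (auto simp: kron_def mat_def vec_eq_iff prod_eq_iff)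

lemma hermitian_conj_transpose:
  assumes "hermitian A" shows "A $ j $ i = cnj (A $ i $ j)"
proof -
  have "adj A $ j $ i = A $ j $ i" using assms by (simp add: hermitian_def)
  then show ?thesis by (simp add: adj_def)
qed

lemma ptrans_kron:
  assumes "hermitian A" shows "ptrans (kron A B) = kron (mconj A) B"
  unfolding vec_eq_iff
proof (intro allI)
  fix p q :: "'a \<times> 'b"
  show "ptrans (kron A B) $ p $ q = kron (mconj A) B $ p $ q"
    using hermitian_conj_transpose[OF assms, of "fst p" "fst q"]
    by (simp add: ptrans_def kron_def mconj_def)
qed

lemma adj_mconj: "adj (mconj M) = mconj (adj M)"
  by (simp add: mconj_def adj_def vec_eq_iff)

lemma adj_ptrans: "adj (ptrans M) = ptrans (adj M)"
  by (simp add: ptrans_def adj_def vec_eq_iff)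

lemma hermitian_mconj: "hermitian W \<Longrightarrow> hermitian (mconj W)"
  by (simp add: hermitian_def adj_mconj)

lemma hermitian_ptrans: "hermitian W \<Longrightarrow> hermitian (ptrans W)"
  by (simp add: hermitian_def adj_ptrans)

lemma hermitian_congruence: "hermitian M \<Longrightarrow> hermitian (K ** M ** adj K)"
  by (simp add: hermitian_def adj_matrix_mult matrix_mul_assoc)

lemma hermitian_convex_combination:
  "hermitian W \<Longrightarrow> hermitian W' \<Longrightarrow> hermitian (u *\<^sub>R W + v *\<^sub>R W')"
  by (simp add: hermitian_def linear_add[OF linear_adj] linear_scale[OF linear_adj])

lemma quadratic_form_matrix_vector_mult:
  "(\<Sum>i\<in>UNIV. \<Sum>j\<in>UNIV. cnj (x $ i) * M $ i $ j * x $ j) = (\<Sum>i\<in>UNIV. cnj (x $ i) * (M *v x) $ i)"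
  by (simp add: matrix_vector_mult_def sum_distrib_left mult.assoc)

lemma inner_matrix_vector_mult_adj:
  "(\<Sum>i\<in>UNIV. cnj (x $ i) * (K *v z) $ i) = (\<Sum>k\<in>UNIV. cnj ((adj K *v x) $ k) * z $ k)"
proof -
  have "(\<Sum>i\<in>UNIV. cnj (x $ i) * (K *v z) $ i) = (\<Sum>i\<in>UNIV. \<Sum>k\<in>UNIV. cnj (x $ i) * K $ i $ k * z $ k)"
    by (simp add: matrix_vector_mult_def sum_distrib_left mult.assoc)
  also have "\<dots> = (\<Sum>k\<in>UNIV. \<Sum>i\<in>UNIV. cnj (x $ i) * K $ i $ k * z $ k)"
    by (rule sum.swap)
  also have "\<dots> = (\<Sum>k\<in>UNIV. cnj ((adj K *v x) $ k) * z $ k)"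
    by (simp add: matrix_vector_mult_def adj_def cnj_sum sum_distrib_left sum_distrib_right mult_ac)
  finally show ?thesis .
qed

lemma psd_congruence:
  fixes K :: "complex^'n^'m"
  assumes "psd M" shows "psd (K ** M ** adj K)"
  unfolding psd_def
proof (intro conjI allI)
  show "hermitian (K ** M ** adj K)"
    using assms by (simp add: psd_def hermitian_congruence)
next
  fix x :: "complex^'m"
  let ?y = "adj K *v x"
  have "(\<Sum>i\<in>UNIV. \<Sum>j\<in>UNIV. cnj (x $ i) * (K ** M ** adj K) $ i $ j * x $ j)
      = (\<Sum>i\<in>UNIV. cnj (x $ i) * (K *v (M *v ?y)) $ i)"
    by (simp add: quadratic_form_matrix_vector_mult matrix_vector_mul_assoc matrix_mul_assoc)
  also have "\<dots> = (\<Sum>i\<in>UNIV. \<Sum>j\<in>UNIV. cnj (?y $ i) * M $ i $ j * ?y $ j)"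
    by (simp add: inner_matrix_vector_mult_adj quadratic_form_matrix_vector_mult)
  finally show "0 \<le> Re (\<Sum>i\<in>UNIV. \<Sum>j\<in>UNIV. cnj (x $ i) * (K ** M ** adj K) $ i $ j * x $ j)"
    using assms by (simp add: psd_def)
qed

lemma psd_mconj:
  assumes "psd M" shows "psd (mconj M)"
  unfolding psd_def
proof (intro conjI allI)
  show "hermitian (mconj M)"
    using assms by (simp add: psd_def hermitian_mconj)
next
  fix x :: "complex^'a"
  let ?y = "\<chi> i. cnj (x $ i)"
  have "(\<Sum>i\<in>UNIV. \<Sum>j\<in>UNIV. cnj (x $ i) * mconj M $ i $ j * x $ j)
      = cnj (\<Sum>i\<in>UNIV. \<Sum>j\<in>UNIV. cnj (?y $ i) * M $ i $ j * ?y $ j)"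
    by (simp add: mconj_def)
  moreover have "0 \<le> Re (\<Sum>i\<in>UNIV. \<Sum>j\<in>UNIV. cnj (?y $ i) * M $ i $ j * ?y $ j)"
    using assms unfolding psd_def by blast
  ultimately show "0 \<le> Re (\<Sum>i\<in>UNIV. \<Sum>j\<in>UNIV. cnj (x $ i) * mconj M $ i $ j * x $ j)"
    by (simp only: cnj.sel)
qed

lemma hermitian_if_is_state: "is_state M \<Longrightarrow> hermitian M"
  by (simp add: is_state_def psd_def)

lemma is_state_mconj: "is_state M \<Longrightarrow> is_state (mconj M)"
  by (simp add: is_state_def psd_mconj trace_mconj)

lemma is_state_unitary_congruence: "unitary K \<Longrightarrow> is_state M \<Longrightarrow> is_state (K ** M ** adj K)"
  by (simp add: is_state_def psd_congruence trace_unitary_congruence)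

lemma is_state_ptrans_if_PPT: "PPT \<rho> \<Longrightarrow> is_state (ptrans \<rho>)"
  by (simp add: PPT_def is_state_def trace_ptrans)

lemma unitary_adj: "unitary U \<Longrightarrow> unitary (adj U)"
  by (simp add: unitary_def)

lemma unitary_kron: "unitary U \<Longrightarrow> unitary V \<Longrightarrow> unitary (kron U V)"
  by (simp add: unitary_def adj_kron kron_matrix_mult kron_mat_1)

lemma separable_linear_image:
  fixes f :: "complex^('a::finite \<times> 'b::finite)^('a \<times> 'b) \<Rightarrow> complex^('c::finite \<times> 'd::finite)^('c \<times> 'd)"
  assumes "linear f"
    and f_kron: "\<And>A B. is_state A \<Longrightarrow> is_state B \<Longrightarrow> f (kron A B) = kron (g A) (h B)"
    and "\<And>A. is_state A \<Longrightarrow> is_state (g A)" and "\<And>B. is_state B \<Longrightarrow> is_state (h B)"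
    and "separable \<sigma>"
  shows "separable (f \<sigma>)"
proof -
  obtain I :: "nat set" and p A B where I: "finite I"
    "\<forall>i\<in>I. 0 \<le> p i \<and> is_state (A i) \<and> is_state (B i)" "sum p I = 1"
    "\<sigma> = (\<Sum>i\<in>I. p i *\<^sub>R kron (A i) (B i))"
    using \<open>separable \<sigma>\<close> unfolding separable_def by blast
  then have "f \<sigma> = (\<Sum>i\<in>I. p i *\<^sub>R kron (g (A i)) (h (B i)))"
    by (simp add: linear_sum[OF \<open>linear f\<close>] linear_scale[OF \<open>linear f\<close>] f_kron)
  then show ?thesis
    unfolding separable_def using I assms(3,4)
    by (intro exI[of _ I] exI[of _ p] exI[of _ "\<lambda>i. g (A i)"] exI[of _ "\<lambda>i. h (B i)"]) auto
qed

lemma separable_mconj: "separable \<sigma> \<Longrightarrow> separable (mconj \<sigma>)"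
  by (rule separable_linear_image[where g = mconj and h = mconj])
    (simp_all add: linear_mconj mconj_kron is_state_mconj)

lemma separable_ptrans: "separable \<sigma> \<Longrightarrow> separable (ptrans \<sigma>)"
  by (rule separable_linear_image[where g = mconj and h = "\<lambda>B. B"])
    (auto simp: linear_ptrans is_state_mconj intro: ptrans_kron hermitian_if_is_state)

lemma separable_kron_congruence:
  "unitary U \<Longrightarrow> unitary V \<Longrightarrow> separable \<sigma> \<Longrightarrow> separable (kron U V ** \<sigma> ** adj (kron U V))"
  by (rule separable_linear_image[where g = "\<lambda>A. U ** A ** adj U" and h = "\<lambda>B. V ** B ** adj V"])
    (simp_all add: linear_matrix_sandwich adj_kron kron_matrix_mult is_state_unitary_congruence)

lemma mem_EWset_iff:
  "entangled \<rho> \<Longrightarrow> W \<in> EWset \<rho> \<longleftrightarrow>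
     hermitian W \<and> (\<forall>\<sigma>. separable \<sigma> \<longrightarrow> 0 \<le> Re (trace (W ** \<sigma>))) \<and> Re (trace (W ** \<rho>)) < 0"
  by (auto simp: EWset_def EW_def)

lemma convex_EWset:
  assumes "entangled \<rho>" shows "convex (EWset \<rho>)"
proof (rule convexI)
  fix W W' and u v :: real
  assume "W \<in> EWset \<rho>" "W' \<in> EWset \<rho>" "0 \<le> u" "0 \<le> v" "u + v = 1"
  then show "u *\<^sub>R W + v *\<^sub>R W' \<in> EWset \<rho>"
    using assms
    by (auto simp: mem_EWset_iff hermitian_convex_combination Re_trace_mult_convex_combination
        intro!: convex_bound_lt)
qed

locale EW_symmetry =
  fixes f g :: "complex^('a::finite \<times> 'b::finite)^('a \<times> 'b) \<Rightarrow> complex^('a \<times> 'b)^('a \<times> 'b)"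
  assumes g_f [simp]: "g (f X) = X" and f_g [simp]: "f (g X) = X"
    and separable_f: "separable \<sigma> \<Longrightarrow> separable (f \<sigma>)"
    and separable_g: "separable \<sigma> \<Longrightarrow> separable (g \<sigma>)"
    and hermitian_f: "hermitian W \<Longrightarrow> hermitian (f W)"
    and hermitian_g: "hermitian W \<Longrightarrow> hermitian (g W)"
    and Re_trace_f: "Re (trace (f W ** f \<sigma>)) = Re (trace (W ** \<sigma>))"
begin

lemma Re_trace_g: "Re (trace (g W ** g \<sigma>)) = Re (trace (W ** \<sigma>))"
  by (metis Re_trace_f f_g)

lemma swap: "EW_symmetry g f"
  by unfold_locales (simp_all add: separable_f separable_g hermitian_f hermitian_g Re_trace_g)

lemma entangled_image: "entangled \<rho> \<Longrightarrow> is_state (f \<rho>) \<Longrightarrow> entangled (f \<rho>)"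
  unfolding entangled_def by (metis g_f separable_g)

lemma mem_EWset_image:
  assumes "entangled \<rho>" "is_state (f \<rho>)" "W \<in> EWset \<rho>"
  shows "f W \<in> EWset (f \<rho>)"
proof -
  have "0 \<le> Re (trace (f W ** \<sigma>))" if "separable \<sigma>" for \<sigma>
    using Re_trace_f[of W "g \<sigma>"] separable_g[OF that] assms by (simp add: mem_EWset_iff)
  then show ?thesis
    using assms entangled_image by (simp add: mem_EWset_iff hermitian_f Re_trace_f)
qed

lemma mem_EWset_image_iff:
  assumes "entangled \<rho>" "is_state (f \<rho>)"
  shows "f W \<in> EWset (f \<rho>) \<longleftrightarrow> W \<in> EWset \<rho>"
proof
  assume "f W \<in> EWset (f \<rho>)"
  then show "W \<in> EWset \<rho>"
    using EW_symmetry.mem_EWset_image[OF swap, of "f \<rho>" "f W"] entangled_image assms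
    by (simp add: entangled_def)
qed (rule mem_EWset_image[OF assms])

lemma EWset_image:
  assumes "entangled \<rho>" "is_state (f \<rho>)"
  shows "EWset (f \<rho>) = f ` EWset \<rho>"
proof (intro equalityI subsetI)
  fix W assume "W \<in> EWset (f \<rho>)"
  then have "g W \<in> EWset \<rho>" using mem_EWset_image_iff[OF assms, of "g W"] by simp
  then show "W \<in> f ` EWset \<rho>" by (metis f_g image_eqI)
qed (auto simp: mem_EWset_image_iff[OF assms])

end

lemma EW_symmetry_mconj: "EW_symmetry mconj mconj"
  by unfold_locales
    (simp_all add: separable_mconj hermitian_mconj mconj_matrix_mult[symmetric] trace_mconj)

lemma EW_symmetry_ptrans: "EW_symmetry ptrans ptrans"
  by unfold_locales (simp_all add: separable_ptrans hermitian_ptrans trace_ptrans_mult)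

lemma EW_symmetry_kron_congruence:
  assumes "unitary U" "unitary V"
  shows "EW_symmetry (\<lambda>X. kron U V ** X ** adj (kron U V)) (\<lambda>X. adj (kron U V) ** X ** kron U V)"
proof -
  let ?K = "kron U V"
  have K: "unitary ?K" using assms by (rule unitary_kron)
  have cancel: "adj ?K ** ?K = mat 1" "?K ** adj ?K = mat 1"
    using K by (simp_all add: unitary_def)
  show ?thesis
  proof
    fix X W \<sigma> :: "complex^('a \<times> 'b)^('a \<times> 'b)"
    show "adj ?K ** (?K ** X ** adj ?K) ** ?K = X" "?K ** (adj ?K ** X ** ?K) ** adj ?K = X"
      by (simp_all add: matrix_mul_assoc) (simp_all add: cancel flip: matrix_mul_assoc)
    show "separable \<sigma> \<Longrightarrow> separable (?K ** \<sigma> ** adj ?K)"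
      using assms by (rule separable_kron_congruence)
    show "separable \<sigma> \<Longrightarrow> separable (adj ?K ** \<sigma> ** ?K)"
      using separable_kron_congruence[OF unitary_adj unitary_adj, OF assms] by (simp add: adj_kron)
    show "hermitian W \<Longrightarrow> hermitian (?K ** W ** adj ?K)"
      by (rule hermitian_congruence)
    show "hermitian W \<Longrightarrow> hermitian (adj ?K ** W ** ?K)"
      using hermitian_congruence[of W "adj ?K"] by simp
    have "?K ** W ** adj ?K ** (?K ** \<sigma> ** adj ?K) = ?K ** (W ** \<sigma>) ** adj ?K"
      by (simp add: matrix_mul_assoc) (simp add: cancel flip: matrix_mul_assoc)
    then show "Re (trace (?K ** W ** adj ?K ** (?K ** \<sigma> ** adj ?K))) = Re (trace (W ** \<sigma>))"
      by (simp add: trace_unitary_congruence[OF K])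
  qed
qed

lemma mconj_real_matrix: "real_matrix W \<Longrightarrow> mconj W = W"
  by (simp add: real_matrix_def mconj_def vec_eq_iff complex_eq_iff)

lemma real_matrix_midpoint_mconj: "real_matrix ((1/2::real) *\<^sub>R W + (1/2::real) *\<^sub>R mconj W)"
  by (simp add: real_matrix_def mconj_def)

lemma ex_real_matrix_EWset_iff:
  assumes "entangled \<rho>"
  shows "(\<exists>W\<in>EWset \<rho>. real_matrix W) \<longleftrightarrow> EWset \<rho> \<inter> EWset (mconj \<rho>) \<noteq> {}"
proof -
  interpret mconj: EW_symmetry mconj mconj by (rule EW_symmetry_mconj)
  have mem_iff: "mconj W \<in> EWset (mconj \<rho>) \<longleftrightarrow> W \<in> EWset \<rho>" for W
    using assms by (simp add: mconj.mem_EWset_image_iff entangled_def is_state_mconj)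
  show ?thesis
  proof
    assume "\<exists>W\<in>EWset \<rho>. real_matrix W"
    then obtain W where "W \<in> EWset \<rho>" "real_matrix W" by blast
    then show "EWset \<rho> \<inter> EWset (mconj \<rho>) \<noteq> {}"
      using mem_iff[of W] mconj_real_matrix[of W] by auto
  next
    assume "EWset \<rho> \<inter> EWset (mconj \<rho>) \<noteq> {}"
    then obtain W where "W \<in> EWset \<rho>" "mconj W \<in> EWset \<rho>"
      using mem_iff[of "mconj W" for W] by auto
    then have "(1/2::real) *\<^sub>R W + (1/2::real) *\<^sub>R mconj W \<in> EWset \<rho>"
      using convex_EWset[OF assms] by (auto intro: convexD)
    then show "\<exists>W\<in>EWset \<rho>. real_matrix W"
      using real_matrix_midpoint_mconj by blast
  qed
qed

lemma Re_trace_rho_plus: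
  "Re (trace (W ** rho_plus \<rho>)) = (Re (trace (W ** \<rho>)) + Re (trace (W ** mconj \<rho>))) / 2"
  by (simp add: rho_plus_def matrix_add_ldistrib trace_add trace_scaleR
      matrix_scalar_ac scalar_matrix_assoc[symmetric])

lemma rho_plus_mconj: "rho_plus (mconj \<rho>) = rho_plus \<rho>"
  by (simp add: rho_plus_def add.commute)

lemma EWset_Re_trace_mconj_bound:
  assumes "separable (rho_plus \<rho>)" "W \<in> EWset \<rho>"
  shows "Re (trace (W ** mconj \<rho>)) \<ge> - Re (trace (W ** \<rho>)) \<and> - Re (trace (W ** \<rho>)) > 0"
  using assms Re_trace_rho_plus[of W \<rho>] by (auto simp: EWset_def EW_def)

theorem lemma3:
  fixes \<rho> :: "complex^('a::finite \<times> 'b::finite)^('a \<times> 'b)"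
  assumes "entangled \<rho>"
  shows
    "convex (EWset \<rho>)
     \<and> (entangled (mconj \<rho>)
        \<and> (\<forall>W. W \<in> EWset \<rho> \<longleftrightarrow> mconj W \<in> EWset (mconj \<rho>))
        \<and> ((\<exists>W\<in>EWset \<rho>. real_matrix W) \<longleftrightarrow> EWset \<rho> \<inter> EWset (mconj \<rho>) \<noteq> {}))
     \<and> (PPT \<rho> \<longrightarrow> (\<forall>W. W \<in> EWset \<rho> \<longleftrightarrow> ptrans W \<in> EWset (ptrans \<rho>)))
     \<and> (PPT \<rho> \<and> separable (rho_plus \<rho>) \<longrightarrow>
          (\<forall>W\<in>EWset \<rho>. Re (trace (W ** mconj \<rho>)) \<ge> - Re (trace (W ** \<rho>))
                          \<and> - Re (trace (W ** \<rho>)) > 0)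
        \<and> (\<forall>W\<in>EWset (mconj \<rho>). Re (trace (W ** \<rho>)) \<ge> - Re (trace (W ** mconj \<rho>))
                          \<and> - Re (trace (W ** mconj \<rho>)) > 0))
     \<and> (\<forall>(U::complex^'a^'a) (V::complex^'b^'b) \<sigma>.
          unitary U \<and> unitary V \<and> \<sigma> = kron U V ** \<rho> ** adj (kron U V) \<longrightarrow>
            (\<forall>W\<in>EWset \<rho>. kron U V ** W ** adj (kron U V) \<in> EWset \<sigma>)
          \<and> EWset \<sigma> = (\<lambda>W. kron U V ** W ** adj (kron U V)) ` EWset \<rho>)"
proof -
  interpret mconj: EW_symmetry mconj mconj by (rule EW_symmetry_mconj)
  interpret ptrans: EW_symmetry ptrans ptrans by (rule EW_symmetry_ptrans)
  have state_mconj: "is_state (mconj \<rho>)"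
    using assms by (simp add: entangled_def is_state_mconj)
  have unitary_image:
    "EWset (kron U V ** \<rho> ** adj (kron U V)) = (\<lambda>W. kron U V ** W ** adj (kron U V)) ` EWset \<rho>"
    if "unitary U" "unitary V" for U :: "complex^'a^'a" and V :: "complex^'b^'b"
    using EW_symmetry.EWset_image[OF EW_symmetry_kron_congruence[OF that] assms]
      is_state_unitary_congruence[OF unitary_kron[OF that]] assms
    by (simp add: entangled_def)
  have mconj_bound:
    "Re (trace (W ** \<rho>)) \<ge> - Re (trace (W ** mconj \<rho>)) \<and> - Re (trace (W ** mconj \<rho>)) > 0"
    if "separable (rho_plus \<rho>)" "W \<in> EWset (mconj \<rho>)" for W
    using EWset_Re_trace_mconj_bound[of "mconj \<rho>" W] that by (simp add: rho_plus_mconj)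
  show ?thesis
    using assms convex_EWset mconj.entangled_image[OF assms state_mconj]
      mconj.mem_EWset_image_iff[OF assms state_mconj] ex_real_matrix_EWset_iff[OF assms]
      ptrans.mem_EWset_image_iff[OF assms is_state_ptrans_if_PPT]
      EWset_Re_trace_mconj_bound[of \<rho>] mconj_bound unitary_image
    by (intro conjI allI impI ballI) auto
qed

end
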